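(* Let $X\sim\mathrm{Binom}(n,\tfrac12)$. Then, as $n\to\infty$, with logarithms natural (units: nats), $$H(X)=\frac12\ln\frac{\pi e n}{2}-\frac1{12n^2}+O(n^{-3}),$$ $$V(X)=\frac12-\frac1{2n}-\frac1{2n^2}+O(n^{-3}),$$ where $H(X)=\mathbb E[\ln\frac1{P_X(X)}]$ is the entropy and $V(X)=\mathrm{Var}[\ln\frac1{P_X(X)}]$ is the varentropy. *)

theory Defs
  imports "HOL-Probability.Probability" "HOL-Library.Landau_Symbols"
begin

definition binom_info :: "nat \<Rightarrow> nat \<Rightarrow> real" where
  "binom_info n k = ln (1 / pmf (binomial_pmf n (1/2)) k)"

definition binom_entropy :: "nat \<Rightarrow> real" where
  "binom_entropy n = measure_pmf.expectation (binomial_pmf n (1/2)) (binom_info n)"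

definition binom_varentropy :: "nat \<Rightarrow> real" where
  "binom_varentropy n = measure_pmf.variance (binomial_pmf n (1/2)) (binom_info n)"

end

theory Submission
  imports Defs "HOL-Real_Asymp.Real_Asymp"
begin

text \<open>For \<open>k \<sim> Binom(n, 1/2)\<close> write \<open>x = 2k/n - 1\<close> and \<open>z\<^sup>2 = n x\<^sup>2\<close>, the squared standardised
  deviation. Stirling's formula with remainder \<open>O(m\<^sup>-\<^sup>3)\<close> (the successive remainders
  telescope, and Wallis' product fixes the constant) together with Taylor expansion of
  \<open>(1 \<plusminus> x) ln (1 \<plusminus> x)\<close> writes the information density as
  \<open>ln (\<pi> n / 2) / 2 + 1 / (4 n) + a\<^sub>n x\<^sup>2 + b\<^sub>n x\<^sup>4 + c\<^sub>n x\<^sup>6\<close> plus an error bounded by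
  \<open>C (1 + z\<^sup>2)\<^sup>4 / n\<^sup>3\<close>, with \<open>a\<^sub>n, b\<^sub>n, c\<^sub>n = O(n)\<close>.
  The exact even central moments of the binomial law up to order eight give entropy and
  varentropy of the polynomial part to order \<open>n\<^sup>-\<^sup>3\<close>, while the sub-Gaussian moment
  generating function bounds every moment of \<open>z\<^sup>2\<close> uniformly in \<open>n\<close>, so that the error,
  its covariance with the polynomial part and the moments of \<open>x\<close> of order ten and twelve
  only contribute \<open>O(n\<^sup>-\<^sup>3)\<close>.\<close>

definition binomial_mean :: "nat \<Rightarrow> (nat \<Rightarrow> real) \<Rightarrow> real" where
  "binomial_mean n f = (\<Sum>k\<le>n. real (n choose k) * f k) / 2 ^ n"

lemma expectation_binomial_half:
  "measure_pmf.expectation (binomial_pmf n (1/2)) f = binomial_mean n f"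
proof -
  have "measure_pmf.expectation (binomial_pmf n (1/2)) f =
      (\<Sum>k\<le>n. (real (n choose k) * (1/2) ^ k * (1 - 1/2) ^ (n - k)) *\<^sub>R f k)"
    by (rule expectation_binomial_pmf') auto
  also have "\<dots> = (\<Sum>k\<le>n. real (n choose k) * f k / 2 ^ n)"
  proof (rule sum.cong)
    fix k assume "k \<in> {..n}"
    hence "(1/2::real) ^ k * (1/2) ^ (n - k) = (1/2) ^ n"
      by (simp add: power_add [symmetric])
    thus "(real (n choose k) * (1/2) ^ k * (1 - 1/2) ^ (n - k)) *\<^sub>R f k
        = real (n choose k) * f k / 2 ^ n"
      by (simp add: power_divide)
  qed simp
  finally show ?thesis
    unfolding binomial_mean_def by (simp add: sum_divide_distrib)
qed

lemma binomial_mean_cong: "(\<And>k. k \<le> n \<Longrightarrow> f k = g k) \<Longrightarrow> binomial_mean n f = binomial_mean n g"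
  unfolding binomial_mean_def by (auto intro!: sum.cong arg_cong[where f = "\<lambda>x. x / 2 ^ n"])

lemma binomial_mean_add: "binomial_mean n (\<lambda>k. f k + g k) = binomial_mean n f + binomial_mean n g"
  unfolding binomial_mean_def by (simp add: distrib_left sum.distrib add_divide_distrib)

lemma binomial_mean_diff: "binomial_mean n (\<lambda>k. f k - g k) = binomial_mean n f - binomial_mean n g"
  unfolding binomial_mean_def by (simp add: right_diff_distrib sum_subtractf diff_divide_distrib)

lemma binomial_mean_cmult: "binomial_mean n (\<lambda>k. c * f k) = c * binomial_mean n f"
  unfolding binomial_mean_def by (simp add: sum_distrib_left mult_ac)

lemma binomial_mean_multc: "binomial_mean n (\<lambda>k. f k * c) = binomial_mean n f * c"
  using binomial_mean_cmult[of n c f] by (simp add: mult_ac)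

lemma binomial_mean_const: "binomial_mean n (\<lambda>k. c) = c"
proof -
  have "(\<Sum>k\<le>n. real (n choose k)) = 2 ^ n"
    using choose_row_sum[of n] by (metis of_nat_numeral of_nat_power of_nat_sum)
  thus ?thesis
    unfolding binomial_mean_def by (simp add: sum_distrib_right [symmetric])
qed

lemma binomial_mean_mono:
  "(\<And>k. k \<le> n \<Longrightarrow> f k \<le> g k) \<Longrightarrow> binomial_mean n f \<le> binomial_mean n g"
  unfolding binomial_mean_def by (auto intro!: divide_right_mono sum_mono mult_left_mono)

lemma binomial_mean_nonneg: "(\<And>k. k \<le> n \<Longrightarrow> 0 \<le> f k) \<Longrightarrow> 0 \<le> binomial_mean n f"
  using binomial_mean_mono[of n "\<lambda>_. 0" f] by (simp add: binomial_mean_const)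

lemma binomial_mean_abs_le:
  assumes "\<And>k. k \<le> n \<Longrightarrow> \<bar>f k\<bar> \<le> g k"
  shows "\<bar>binomial_mean n f\<bar> \<le> binomial_mean n g"
proof -
  have "binomial_mean n f \<le> binomial_mean n g" "binomial_mean n (\<lambda>k. - f k) \<le> binomial_mean n g"
    using assms by (auto intro!: binomial_mean_mono simp: abs_le_iff)
  moreover have "binomial_mean n (\<lambda>k. - f k) = - binomial_mean n f"
    using binomial_mean_cmult[of n "-1" f] by simp
  ultimately show ?thesis
    by (simp add: abs_le_iff)
qed

lemma binomial_mean_square_diff:
  "binomial_mean n (\<lambda>k. (f k - c)\<^sup>2) = binomial_mean n (\<lambda>k. (f k)\<^sup>2) - 2 * c * binomial_mean n f + c\<^sup>2"
proof -
  have "binomial_mean n (\<lambda>k. (f k - c)\<^sup>2) = binomial_mean n (\<lambda>k. (f k)\<^sup>2 - (2 * c) * f k + c\<^sup>2)"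
    by (rule binomial_mean_cong) (simp add: power2_eq_square algebra_simps)
  thus ?thesis
    by (simp only: binomial_mean_add binomial_mean_diff binomial_mean_cmult binomial_mean_const)
qed

text \<open>Pascal's rule: a Binom(n+1, 1/2) variable is a Binom(n, 1/2) variable plus a fair coin.\<close>

lemma binomial_mean_Suc:
  "binomial_mean (Suc n) f = (binomial_mean n f + binomial_mean n (\<lambda>k. f (Suc k))) / 2"
proof -
  have A: "(\<Sum>k\<le>Suc n. real (Suc n choose k) * f k) =
      f 0 + (\<Sum>k\<le>n. real (n choose k) * f (Suc k)) + (\<Sum>k\<le>n. real (n choose Suc k) * f (Suc k))"
    by (simp add: sum.atMost_Suc_shift[of _ n] binomial_Suc_Suc distrib_right sum.distrib
             del: sum.atMost_Suc)
  have "(\<Sum>k\<le>Suc n. real (n choose k) * f k) = (\<Sum>k\<le>n. real (n choose k) * f k)"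
    by simp
  hence B: "(\<Sum>k\<le>n. real (n choose k) * f k) = f 0 + (\<Sum>k\<le>n. real (n choose Suc k) * f (Suc k))"
    by (simp add: sum.atMost_Suc_shift[of _ n] del: sum.atMost_Suc)
  show ?thesis
    unfolding binomial_mean_def using A B by (simp add: field_simps)
qed

definition dev :: "nat \<Rightarrow> nat \<Rightarrow> real" where
  "dev n k = real k - real n / 2"

lemma binomial_mean_Suc_dev:
  "binomial_mean (Suc n) (\<lambda>k. f (dev (Suc n) k))
     = (binomial_mean n (\<lambda>k. f (dev n k - 1/2)) + binomial_mean n (\<lambda>k. f (dev n k + 1/2))) / 2"
proof -
  have shift: "dev (Suc n) k = dev n k - 1/2" "dev (Suc n) (Suc k) = dev n k + 1/2" for k
    unfolding dev_def by (simp_all add: field_simps)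
  show ?thesis
    unfolding binomial_mean_Suc shift(2) unfolding shift(1) ..
qed

lemma binomial_mean_Suc_dev_power:
  assumes "\<And>d::real. (d - 1/2) ^ j + (d + 1/2) ^ j = p d"
  shows "binomial_mean (Suc n) (\<lambda>k. dev (Suc n) k ^ j) = binomial_mean n (\<lambda>k. p (dev n k)) / 2"
proof -
  have "binomial_mean (Suc n) (\<lambda>k. dev (Suc n) k ^ j)
      = (binomial_mean n (\<lambda>k. (dev n k - 1/2) ^ j) + binomial_mean n (\<lambda>k. (dev n k + 1/2) ^ j)) / 2"
    by (rule binomial_mean_Suc_dev)
  thus ?thesis
    by (simp add: binomial_mean_add [symmetric] assms)
qed

lemma binomial_central_moments:
  "binomial_mean n (\<lambda>k. dev n k ^ 2) = real n / 4 \<and>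
   binomial_mean n (\<lambda>k. dev n k ^ 4) = (3 * real n ^ 2 - 2 * real n) / 16 \<and>
   binomial_mean n (\<lambda>k. dev n k ^ 6) = (15 * real n ^ 3 - 30 * real n ^ 2 + 16 * real n) / 64 \<and>
   binomial_mean n (\<lambda>k. dev n k ^ 8)
     = (105 * real n ^ 4 - 420 * real n ^ 3 + 588 * real n ^ 2 - 272 * real n) / 256"
proof (induction n)
  case 0
  show ?case by (simp add: binomial_mean_def dev_def)
next
  case (Suc n)
  have "(d - 1/2) ^ 2 + (d + 1/2) ^ 2 = 2 * d ^ 2 + 1/2"
    and "(d - 1/2) ^ 4 + (d + 1/2) ^ 4 = 2 * d ^ 4 + 3 * d ^ 2 + 1/8"
    and "(d - 1/2) ^ 6 + (d + 1/2) ^ 6 = 2 * d ^ 6 + 15/2 * d ^ 4 + 15/8 * d ^ 2 + 1/32"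
    and "(d - 1/2) ^ 8 + (d + 1/2) ^ 8 = 2 * d ^ 8 + 14 * d ^ 6 + 35/4 * d ^ 4 + 7/8 * d ^ 2 + 1/128"
    for d :: real
    by algebra+
  note recurrences = this[THEN binomial_mean_Suc_dev_power]
  show ?case
    unfolding recurrences binomial_mean_add binomial_mean_cmult binomial_mean_const using Suc.IH
    by (simp add: field_simps) (simp add: algebra_simps power2_eq_square power3_eq_cube power4_eq_xxxx)
qed

lemma binomial_mean_exp_dev: "binomial_mean n (\<lambda>k. exp (l * dev n k)) = cosh (l / 2) ^ n"
proof (induction n)
  case 0
  show ?case by (simp add: binomial_mean_def dev_def)
next
  case (Suc n)
  have pair: "exp (l * (d - 1/2)) + exp (l * (d + 1/2)) = exp (l * d) * (2 * cosh (l / 2))" for d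
    by (simp add: cosh_field_def exp_add [symmetric] exp_diff [symmetric] algebra_simps)
  have "binomial_mean (Suc n) (\<lambda>k. exp (l * dev (Suc n) k))
      = (binomial_mean n (\<lambda>k. exp (l * (dev n k - 1/2)))
         + binomial_mean n (\<lambda>k. exp (l * (dev n k + 1/2)))) / 2"
    by (rule binomial_mean_Suc_dev)
  also have "\<dots> = binomial_mean n (\<lambda>k. exp (l * dev n k) * (2 * cosh (l / 2))) / 2"
    by (simp only: binomial_mean_add [symmetric] pair)
  also have "\<dots> = cosh (l / 2) ^ Suc n"
    by (simp add: binomial_mean_multc Suc.IH)
  finally show ?case .
qed

lemma binomial_mean_cosh_dev: "binomial_mean n (\<lambda>k. cosh (l * dev n k)) = cosh (l / 2) ^ n"
proof -
  have "binomial_mean n (\<lambda>k. cosh (l * dev n k))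
      = binomial_mean n (\<lambda>k. exp (l * dev n k) * (1/2) + exp ((- l) * dev n k) * (1/2))"
    by (rule binomial_mean_cong) (simp add: cosh_field_def)
  also have "\<dots> = cosh (l / 2) ^ n"
    by (simp only: binomial_mean_add binomial_mean_multc binomial_mean_exp_dev) simp
  finally show ?thesis .
qed

lemma cosh_le_exp_square: "cosh (x::real) \<le> exp (x\<^sup>2 / 2)"
proof -
  define h where "h = 2 * \<bar>x\<bar>"
  have "- h * (1/2) + ln (1 + (1/2) * (exp h - 1)) \<le> h\<^sup>2 / 8"
    using Hoeffdings_lemma_aux[of h "1/2"] by (simp add: h_def)
  moreover have "1 + (1/2) * (exp h - 1) = exp (\<bar>x\<bar>) * cosh x"
    by (simp add: h_def cosh_field_def exp_add [symmetric] field_simps abs_if)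
  moreover have "h\<^sup>2 / 8 = x\<^sup>2 / 2"
    by (simp add: h_def power_mult_distrib)
  ultimately have "ln (exp \<bar>x\<bar> * cosh x) \<le> \<bar>x\<bar> + x\<^sup>2 / 2"
    by (simp add: h_def)
  hence "ln (cosh x) \<le> x\<^sup>2 / 2"
    by (simp add: ln_mult)
  hence "exp (ln (cosh x)) \<le> exp (x\<^sup>2 / 2)"
    by (simp only: exp_le_cancel_iff)
  thus ?thesis
    by simp
qed

lemma even_power_le_fact_cosh: "(x::real) ^ (2 * m) \<le> fact (2 * m) * cosh x"
proof -
  let ?a = "\<lambda>n. if even n then x ^ n /\<^sub>R fact n else 0"
  have "sum ?a {2 * m} \<le> suminf ?a"
    using cosh_converges[of x]
    by (intro sum_le_suminf) (auto simp: sums_iff zero_le_even_power)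
  thus ?thesis
    using cosh_converges[of x] by (simp add: sums_iff field_simps)
qed

definition zsq :: "nat \<Rightarrow> nat \<Rightarrow> real" where
  "zsq n k = 4 * dev n k ^ 2 / real n"

lemma zsq_nonneg: "0 \<le> zsq n k"
  unfolding zsq_def by simp

text \<open>The mean of \<open>cosh (l * dev n k)\<close> is \<open>cosh (l/2) ^ n \<le> exp (n l\<^sup>2 / 8)\<close>, which is \<open>exp (1/8)\<close>
  at \<open>l = 1 / sqrt n\<close>; with \<open>z ^ (2 m) \<le> (2 m)! cosh z\<close> this bounds every moment of \<open>zsq\<close>
  uniformly in \<open>n\<close>.\<close>

lemma binomial_mean_zsq_power_le:
  assumes "n \<ge> 1"
  shows "binomial_mean n (\<lambda>k. zsq n k ^ m) \<le> 4 ^ m * fact (2 * m) * exp (1/8)"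
proof -
  define l where "l = 1 / sqrt (real n)"
  have l2: "l\<^sup>2 = 1 / real n"
    using assms by (simp add: l_def power_divide)
  have "zsq n k ^ m = 4 ^ m * (l * dev n k) ^ (2 * m)" for k
    unfolding zsq_def power_mult power_mult_distrib l2 by (simp add: power_mult_distrib field_simps)
  hence "binomial_mean n (\<lambda>k. zsq n k ^ m)
      \<le> binomial_mean n (\<lambda>k. 4 ^ m * fact (2 * m) * cosh (l * dev n k))"
    by (intro binomial_mean_mono) (use even_power_le_fact_cosh[of "l * dev n _" m] in auto)
  also have "\<dots> = 4 ^ m * fact (2 * m) * cosh (l / 2) ^ n"
    by (simp add: binomial_mean_cmult binomial_mean_cosh_dev)
  also have "cosh (l / 2) ^ n \<le> exp ((l / 2)\<^sup>2 / 2) ^ n"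
    by (intro power_mono cosh_le_exp_square) simp
  also have "\<dots> = exp (1/8)"
    using assms by (simp add: exp_of_nat_mult [symmetric] power_divide l2)
  finally show ?thesis by simp
qed

lemma one_plus_power_le:
  fixes y :: real
  assumes "0 \<le> y"
  shows "(1 + y) ^ m \<le> 2 ^ m * (1 + y ^ m)"
proof (cases "y \<le> 1")
  case True
  have "(1 + y) ^ m \<le> 2 ^ m"
    using True assms by (intro power_mono) auto
  moreover have "0 \<le> 2 ^ m * y ^ m"
    using assms by simp
  ultimately show ?thesis
    unfolding distrib_left by linarith
next
  case False
  have "(1 + y) ^ m \<le> (2 * y) ^ m"
    using False by (intro power_mono) auto
  moreover have "(2 * y) ^ m = 2 ^ m * y ^ m" and "(0::real) \<le> 2 ^ m"
    by (simp_all add: power_mult_distrib)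
  ultimately show ?thesis
    unfolding distrib_left by linarith
qed

lemma binomial_mean_one_plus_zsq_power_bounded:
  "\<exists>K. \<forall>n\<ge>1. binomial_mean n (\<lambda>k. (1 + zsq n k) ^ m) \<le> K"
proof (intro exI allI impI)
  fix n :: nat
  assume n: "n \<ge> 1"
  have "binomial_mean n (\<lambda>k. (1 + zsq n k) ^ m) \<le> binomial_mean n (\<lambda>k. 2 ^ m * (1 + zsq n k ^ m))"
    by (intro binomial_mean_mono one_plus_power_le zsq_nonneg)
  also have "\<dots> = 2 ^ m * (1 + binomial_mean n (\<lambda>k. zsq n k ^ m))"
    by (simp only: binomial_mean_cmult binomial_mean_add binomial_mean_const)
  also have "\<dots> \<le> 2 ^ m * (1 + 4 ^ m * fact (2 * m) * exp (1/8))"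
    using binomial_mean_zsq_power_le[OF n] by simp
  finally show "binomial_mean n (\<lambda>k. (1 + zsq n k) ^ m) \<le> 2 ^ m * (1 + 4 ^ m * fact (2 * m) * exp (1/8))" .
qed

lemma abs_le_power_of_deriv_bound:
  fixes f f' :: "real \<Rightarrow> real"
  assumes f0: "f 0 = 0"
    and deriv: "\<And>t. 0 \<le> t \<Longrightarrow> t \<le> a \<Longrightarrow> (f has_real_derivative f' t) (at t)"
    and bound: "\<And>t. 0 \<le> t \<Longrightarrow> t \<le> a \<Longrightarrow> \<bar>f' t\<bar> \<le> M * t ^ j"
    and x: "0 \<le> x" "x \<le> a"
  shows "\<bar>f x\<bar> \<le> M * x ^ Suc j / real (Suc j)"
proof -
  define F where "F t = M * t ^ Suc j / real (Suc j)" for t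
  have F: "(F has_real_derivative M * t ^ j) (at t)" for t
  proof -
    have "((\<lambda>t. t ^ Suc j) has_real_derivative real (Suc j) * t ^ j) (at t)"
      using DERIV_pow[of "Suc j" t] by simp
    from DERIV_cdivide[OF DERIV_cmult[OF this, of M], of "real (Suc j)"]
    show ?thesis
      unfolding F_def by (simp add: field_simps del: of_nat_Suc)
  qed
  have "F 0 - f 0 \<le> F x - f x"
  proof (rule DERIV_nonneg_imp_nondecreasing[OF x(1)])
    fix t assume "0 \<le> t" "t \<le> x"
    with x have t: "0 \<le> t" "t \<le> a" by auto
    show "\<exists>y. ((\<lambda>t. F t - f t) has_real_derivative y) (at t) \<and> 0 \<le> y"
      using DERIV_diff[OF F deriv[OF t]] bound[OF t] by (intro exI[of _ "M * t ^ j - f' t"]) auto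
  qed
  moreover have "F 0 + f 0 \<le> F x + f x"
  proof (rule DERIV_nonneg_imp_nondecreasing[OF x(1)])
    fix t assume "0 \<le> t" "t \<le> x"
    with x have t: "0 \<le> t" "t \<le> a" by auto
    show "\<exists>y. ((\<lambda>t. F t + f t) has_real_derivative y) (at t) \<and> 0 \<le> y"
      using DERIV_add[OF F deriv[OF t]] bound[OF t] by (intro exI[of _ "M * t ^ j + f' t"]) auto
  qed
  ultimately show ?thesis
    using f0 by (auto simp: F_def)
qed

lemma le_half_bounds:
  fixes s :: real
  assumes "0 \<le> s" "s \<le> 1/2"
  shows "1 - s\<^sup>2 > 0" "1 - s > 0" "1 + s > 0" "1 / (1 - s\<^sup>2) \<le> 4/3"
proof -
  have sq: "s\<^sup>2 \<le> (1/2)\<^sup>2"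
    using assms by (intro power_mono) auto
  thus "1 - s\<^sup>2 > 0" "1 - s > 0" "1 + s > 0"
    using assms by (auto simp: power2_eq_square)
  show "1 / (1 - s\<^sup>2) \<le> 4/3"
    using sq by (simp add: field_simps power2_eq_square)
qed

definition atanh_defect :: "real \<Rightarrow> real" where
  "atanh_defect t = (ln (1 + t) - ln (1 - t)) / 2 - t - t ^ 3 / (3 * (1 - t\<^sup>2))"

lemma abs_atanh_defect_le:
  assumes "0 \<le> t" "t \<le> 1/3"
  shows "\<bar>atanh_defect t\<bar> \<le> t ^ 5 / 5"
proof -
  have "\<bar>atanh_defect t\<bar> \<le> 1 * t ^ Suc 4 / real (Suc 4)"
  proof (rule abs_le_power_of_deriv_bound[where f' = "\<lambda>t. - 2 * t ^ 4 / (3 * (1 - t\<^sup>2)\<^sup>2)" and a = "1/3"])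
    show "atanh_defect 0 = 0"
      by (simp add: atanh_defect_def)
    fix s :: real
    assume s: "0 \<le> s" "s \<le> 1/3"
    have sq: "s\<^sup>2 \<le> (1/3)\<^sup>2"
      using s by (intro power_mono) auto
    hence pos: "1 - s\<^sup>2 > 0" "1 - s > 0" "1 + s > 0"
      using s by (auto simp: power2_eq_square)
    show "(atanh_defect has_real_derivative - 2 * s ^ 4 / (3 * (1 - s\<^sup>2)\<^sup>2)) (at s)"
      unfolding atanh_defect_def [abs_def]
      apply (rule derivative_eq_intros refl | use pos in force)+
      using pos apply simp
      apply (subgoal_tac "3 - 3 * s\<^sup>2 \<noteq> 0" "1 - s\<^sup>2 \<noteq> 0" "1 - s \<noteq> 0" "1 + s \<noteq> 0")
       apply (simp add: divide_simps)
       apply algebra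
      by auto
    have "(1 - s\<^sup>2)\<^sup>2 \<ge> (8/9)\<^sup>2"
      using sq by (intro power_mono) (auto simp: power2_eq_square)
    hence "2 * s ^ 4 / (3 * (1 - s\<^sup>2)\<^sup>2) \<le> 2 * s ^ 4 / (3 * (8/9)\<^sup>2)"
      by (intro divide_left_mono mult_pos_pos) auto
    also have "\<dots> \<le> s ^ 4"
      using s by (simp add: field_simps)
    finally show "\<bar>- 2 * s ^ 4 / (3 * (1 - s\<^sup>2)\<^sup>2)\<bar> \<le> 1 * s ^ 4"
      by simp
  qed (use assms in auto)
  thus ?thesis by simp
qed

definition ln_ratio_taylor_rem :: "real \<Rightarrow> real" where
  "ln_ratio_taylor_rem x = ln (1 + x) - ln (1 - x) - 2 * x - 2 * x ^ 3 / 3 - 2 * x ^ 5 / 5"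

lemma abs_ln_ratio_taylor_rem_le:
  assumes "0 \<le> x" "x \<le> 1/2"
  shows "\<bar>ln_ratio_taylor_rem x\<bar> \<le> 3 * x ^ 7 / 7"
proof -
  have "\<bar>ln_ratio_taylor_rem x\<bar> \<le> 3 * x ^ Suc 6 / real (Suc 6)"
  proof (rule abs_le_power_of_deriv_bound[where f' = "\<lambda>t. 2 * t ^ 6 / (1 - t\<^sup>2)" and a = "1/2"])
    show "ln_ratio_taylor_rem 0 = 0"
      by (simp add: ln_ratio_taylor_rem_def)
    fix s :: real
    assume s: "0 \<le> s" "s \<le> 1/2"
    note pos = le_half_bounds[OF s]
    show "(ln_ratio_taylor_rem has_real_derivative 2 * s ^ 6 / (1 - s\<^sup>2)) (at s)"
      unfolding ln_ratio_taylor_rem_def [abs_def]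
      apply (rule derivative_eq_intros refl | use pos in force)+
      using pos apply simp
      apply (subgoal_tac "1 - s\<^sup>2 \<noteq> 0" "1 - s \<noteq> 0" "1 + s \<noteq> 0")
       apply (simp add: divide_simps)
       apply algebra
      by auto
    have "2 * s ^ 6 / (1 - s\<^sup>2) = 2 * s ^ 6 * (1 / (1 - s\<^sup>2))"
      by simp
    also have "\<dots> \<le> 2 * s ^ 6 * (4/3)"
      using pos by (intro mult_left_mono) auto
    also have "\<dots> \<le> 3 * s ^ 6"
      using s by simp
    finally show "\<bar>2 * s ^ 6 / (1 - s\<^sup>2)\<bar> \<le> 3 * s ^ 6"
      using pos by simp
  qed (use assms in auto)
  thus ?thesis by simp
qed

definition xlnx_taylor_rem :: "real \<Rightarrow> real" where
  "xlnx_taylor_rem x = (1 + x) * ln (1 + x) + (1 - x) * ln (1 - x) - x\<^sup>2 - x ^ 4 / 6 - x ^ 6 / 15"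

lemma abs_xlnx_taylor_rem_le:
  assumes "\<bar>x\<bar> \<le> 1/2"
  shows "\<bar>xlnx_taylor_rem x\<bar> \<le> 3 * x ^ 8 / 56"
proof -
  have "\<bar>xlnx_taylor_rem x\<bar> \<le> 3 * x ^ 8 / 56" if "0 \<le> x" "x \<le> 1/2" for x
  proof -
    have "\<bar>xlnx_taylor_rem x\<bar> \<le> (3/7) * x ^ Suc 7 / real (Suc 7)"
    proof (rule abs_le_power_of_deriv_bound[where f' = ln_ratio_taylor_rem and a = "1/2"])
      show "xlnx_taylor_rem 0 = 0"
        by (simp add: xlnx_taylor_rem_def)
      fix s :: real
      assume s: "0 \<le> s" "s \<le> 1/2"
      note pos = le_half_bounds[OF s]
      show "(xlnx_taylor_rem has_real_derivative ln_ratio_taylor_rem s) (at s)"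
        unfolding xlnx_taylor_rem_def [abs_def]
        apply (rule derivative_eq_intros refl | use pos in force)+
        using pos by (simp add: ln_ratio_taylor_rem_def divide_simps)
      show "\<bar>ln_ratio_taylor_rem s\<bar> \<le> 3/7 * s ^ 7"
        using abs_ln_ratio_taylor_rem_le[OF s] by simp
    qed (use that in auto)
    thus ?thesis by simp
  qed
  moreover have "xlnx_taylor_rem x = xlnx_taylor_rem \<bar>x\<bar>"
    by (cases "x \<ge> 0") (simp_all add: xlnx_taylor_rem_def)
  ultimately show ?thesis
    using assms by (metis abs_ge_zero power_even_abs_numeral even_numeral)
qed

definition ln_one_minus_sq_taylor_rem :: "real \<Rightarrow> real" where
  "ln_one_minus_sq_taylor_rem x = ln (1 - x\<^sup>2) + x\<^sup>2 + x ^ 4 / 2"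

lemma abs_ln_one_minus_sq_taylor_rem_le:
  assumes "\<bar>x\<bar> \<le> 1/2"
  shows "\<bar>ln_one_minus_sq_taylor_rem x\<bar> \<le> x ^ 6 / 2"
proof -
  have "\<bar>ln_one_minus_sq_taylor_rem x\<bar> \<le> x ^ 6 / 2" if "0 \<le> x" "x \<le> 1/2" for x
  proof -
    have "\<bar>ln_one_minus_sq_taylor_rem x\<bar> \<le> 3 * x ^ Suc 5 / real (Suc 5)"
    proof (rule abs_le_power_of_deriv_bound[where f' = "\<lambda>t. - 2 * t ^ 5 / (1 - t\<^sup>2)" and a = "1/2"])
      show "ln_one_minus_sq_taylor_rem 0 = 0"
        by (simp add: ln_one_minus_sq_taylor_rem_def)
      fix s :: real
      assume s: "0 \<le> s" "s \<le> 1/2"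
      note pos = le_half_bounds[OF s]
      show "(ln_one_minus_sq_taylor_rem has_real_derivative - 2 * s ^ 5 / (1 - s\<^sup>2)) (at s)"
        unfolding ln_one_minus_sq_taylor_rem_def [abs_def]
        apply (rule derivative_eq_intros refl | use pos in force)+
        using pos apply simp
        apply (subgoal_tac "1 - s\<^sup>2 \<noteq> 0")
         apply (simp add: divide_simps)
         apply algebra
        by auto
      have "2 * s ^ 5 / (1 - s\<^sup>2) = 2 * s ^ 5 * (1 / (1 - s\<^sup>2))"
        by simp
      also have "\<dots> \<le> 2 * s ^ 5 * (4/3)"
        using pos s by (intro mult_left_mono) auto
      also have "\<dots> \<le> 3 * s ^ 5"
        using s by simp
      finally show "\<bar>- 2 * s ^ 5 / (1 - s\<^sup>2)\<bar> \<le> 3 * s ^ 5"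
        using pos s by simp
    qed (use that in auto)
    thus ?thesis by simp
  qed
  moreover have "ln_one_minus_sq_taylor_rem x = ln_one_minus_sq_taylor_rem \<bar>x\<bar>"
    by (simp add: ln_one_minus_sq_taylor_rem_def)
  ultimately show ?thesis
    using assms by (metis abs_ge_zero power_even_abs_numeral even_numeral)
qed

definition stirling_approx :: "real \<Rightarrow> real" where
  "stirling_approx m = (m + 1/2) * ln m - m + ln (2 * pi) / 2 + 1 / (12 * m)"

definition stirling_err :: "nat \<Rightarrow> real" where
  "stirling_err m = ln (fact m) - stirling_approx (real m)"

lemma stirling_err_diff:
  assumes "m \<ge> 1"
  shows "stirling_err m - stirling_err (Suc m) = atanh_defect (1 / (2 * real m + 1)) * (2 * real m + 1)"
proof -
  define t where "t = 1 / (2 * real m + 1)"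
  define A where "A = ln (real m)"
  define B where "B = ln (real m + 1)"
  define F where "F = ln (fact m :: real)"
  define C where "C = ln (2 * pi) / 2"
  define c0 where "c0 = 1 / (12 * real m)"
  define c1 where "c1 = 1 / (12 * (real m + 1))"
  have m0: "real m > 0"
    using assms by simp
  have err_m: "stirling_err m = F - ((real m + 1/2) * A - real m + C + c0)"
    unfolding stirling_err_def stirling_approx_def F_def A_def C_def c0_def ..
  have err_Suc: "stirling_err (Suc m) = B + F - ((real m + 1 + 1/2) * B - (real m + 1) + C + c1)"
  proof -
    have "ln (fact (Suc m) :: real) = B + F"
      unfolding B_def F_def by (simp add: ln_mult add.commute)
    moreover have "real (Suc m) = real m + 1"
      by simp
    ultimately show ?thesis
      by (simp only: stirling_err_def stirling_approx_def B_def C_def c1_def)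
  qed
  have ln_plus: "ln (1 + t) = ln 2 + B - ln (2 * real m + 1)"
  proof -
    have ratio: "1 + t = 2 * (real m + 1) / (2 * real m + 1)"
      unfolding t_def using m0 by (simp add: field_simps)
    have "ln (1 + t) = ln (2 * (real m + 1)) - ln (2 * real m + 1)"
      unfolding ratio using m0 by (subst ln_div) auto
    also have "ln (2 * (real m + 1)) = ln 2 + B"
      unfolding B_def using m0 by (subst ln_mult) auto
    finally show ?thesis .
  qed
  have ln_minus: "ln (1 - t) = ln 2 + A - ln (2 * real m + 1)"
  proof -
    have ratio: "1 - t = 2 * real m / (2 * real m + 1)"
      unfolding t_def using m0 by (simp add: field_simps)
    have "ln (1 - t) = ln (2 * real m) - ln (2 * real m + 1)"
      unfolding ratio using m0 by (subst ln_div) auto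
    also have "ln (2 * real m) = ln 2 + A"
      unfolding A_def using m0 by (subst ln_mult) auto
    finally show ?thesis .
  qed
  have t_inv: "t * (2 * real m + 1) = 1"
    unfolding t_def using m0 by simp
  have cubic: "t ^ 3 / (3 * (1 - t\<^sup>2)) * (2 * real m + 1) = c0 - c1"
  proof -
    have "t\<^sup>2 * (2 * real m + 1)\<^sup>2 = 1"
      using t_inv by (metis power_mult_distrib power_one)
    moreover have "4 * real m * (real m + 1) * t\<^sup>2 + t\<^sup>2 = t\<^sup>2 * (2 * real m + 1)\<^sup>2"
      by (simp add: algebra_simps power2_eq_square)
    ultimately have one_minus: "1 - t\<^sup>2 = 4 * real m * (real m + 1) * t\<^sup>2"
      by linarith
    have "t > 0"
      unfolding t_def using m0 by simp
    have "t ^ 3 / (3 * (1 - t\<^sup>2)) * (2 * real m + 1)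
        = t\<^sup>2 * (t * (2 * real m + 1)) / (3 * (4 * real m * (real m + 1) * t\<^sup>2))"
      unfolding one_minus by (simp add: power3_eq_cube power2_eq_square mult_ac)
    also have "\<dots> = 1 / (12 * real m * (real m + 1))"
      unfolding t_inv using \<open>t > 0\<close> by simp
    also have "\<dots> = c0 - c1"
      unfolding c0_def c1_def using m0 by (simp add: field_simps)
    finally show ?thesis .
  qed
  have "atanh_defect t * (2 * real m + 1)
      = (ln (1 + t) - ln (1 - t)) / 2 * (2 * real m + 1) - t * (2 * real m + 1)
        - t ^ 3 / (3 * (1 - t\<^sup>2)) * (2 * real m + 1)"
    unfolding atanh_defect_def by (simp add: algebra_simps)
  also have "\<dots> = (B - A) / 2 * (2 * real m + 1) - 1 - (c0 - c1)"
    unfolding t_inv cubic ln_plus ln_minus by simp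
  also have "\<dots> = stirling_err m - stirling_err (Suc m)"
    unfolding err_m err_Suc by (simp add: field_simps)
  finally show ?thesis
    unfolding t_def by simp
qed

lemma telescoping_limit_bound:
  fixes a b :: "nat \<Rightarrow> real"
  assumes step: "\<And>m. m \<ge> 1 \<Longrightarrow> \<bar>a m - a (Suc m)\<bar> \<le> b m - b (Suc m)"
    and b: "b \<longlonglongrightarrow> 0"
  obtains L where "a \<longlonglongrightarrow> L" "\<And>m. m \<ge> 1 \<Longrightarrow> \<bar>a m - L\<bar> \<le> b m"
proof -
  define U where "U i = a (Suc i) - b (Suc i)" for i
  define V where "V i = a (Suc i) + b (Suc i)" for i
  have b_Suc: "(\<lambda>i. b (Suc i)) \<longlonglongrightarrow> 0"
    using b by (simp only: filterlim_sequentially_Suc)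
  have step': "\<bar>a (Suc i) - a (Suc (Suc i))\<bar> \<le> b (Suc i) - b (Suc (Suc i))" for i
    using step[of "Suc i"] by simp
  have "decseq (\<lambda>i. b (Suc i))"
  proof (rule decseq_SucI)
    fix i
    show "b (Suc (Suc i)) \<le> b (Suc i)"
      using step'[of i] abs_ge_zero[of "a (Suc i) - a (Suc (Suc i))"] by linarith
  qed
  hence b_nonneg: "0 \<le> b (Suc i)" for i
    using decseq_ge[OF _ b_Suc] by blast
  have "\<forall>i. U i \<le> U (Suc i)" "\<forall>i. V (Suc i) \<le> V i"
    using step' unfolding U_def V_def abs_le_iff by (simp_all add: algebra_simps)
  moreover have "\<forall>i. U i \<le> V i"
    unfolding U_def V_def using b_nonneg by (simp add: algebra_simps)
  moreover have "(\<lambda>i. U i - V i) \<longlonglongrightarrow> 0"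
    unfolding U_def V_def using tendsto_mult_left[OF b_Suc, of "-2"] by simp
  ultimately obtain L where UL: "\<forall>i. U i \<le> L" "U \<longlonglongrightarrow> L" and VL: "\<forall>i. L \<le> V i"
    using nested_sequence_unique by blast
  show ?thesis
  proof
    have "(\<lambda>i. U i + b (Suc i)) \<longlonglongrightarrow> L + 0"
      by (intro tendsto_add UL b_Suc)
    hence "(\<lambda>i. a (Suc i)) \<longlonglongrightarrow> L"
      by (simp add: U_def)
    thus "a \<longlonglongrightarrow> L"
      by (rule LIMSEQ_imp_Suc)
  next
    fix m :: nat
    assume "m \<ge> 1"
    then obtain i where m: "m = Suc i"
      by (cases m) auto
    have "U i \<le> L" "L \<le> V i"
      using UL(1) VL by auto
    thus "\<bar>a m - L\<bar> \<le> b m"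
      unfolding m U_def V_def by linarith
  qed
qed

lemma abs_stirling_err_diff_le:
  assumes "m \<ge> 1"
  shows "\<bar>stirling_err m - stirling_err (Suc m)\<bar> \<le> 1 / (5 * (2 * real m + 1) ^ 4)"
proof -
  define t where "t = 1 / (2 * real m + 1)"
  have t: "0 \<le> t" "t \<le> 1/3" "t * (2 * real m + 1) = 1"
    unfolding t_def using assms by (auto simp: field_simps)
  have "\<bar>stirling_err m - stirling_err (Suc m)\<bar> = \<bar>atanh_defect t\<bar> * (2 * real m + 1)"
    unfolding stirling_err_diff[OF assms] t_def abs_mult by simp
  also have "\<dots> \<le> t ^ 5 / 5 * (2 * real m + 1)"
    by (intro mult_right_mono abs_atanh_defect_le t) simp
  also have "\<dots> = t ^ 4 / 5 * (t * (2 * real m + 1))"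
    by (simp add: eval_nat_numeral mult_ac)
  also have "\<dots> = 1 / (5 * (2 * real m + 1) ^ 4)"
    unfolding t(3) t_def by (simp add: power_divide)
  finally show ?thesis .
qed

lemma inverse_rising_diff_ge:
  fixes x :: real
  assumes "x \<ge> 1"
  shows "1 / (5 * (2 * x + 1) ^ 4) \<le> 1 / (10 * (x * (x + 1) * (x + 2))) - 1 / (10 * ((x + 1) * (x + 2) * (x + 3)))"
proof -
  define P where "P = x * (x + 1) * (x + 2) * (x + 3)"
  have P: "P > 0"
    unfolding P_def using assms by simp
  have diff: "1 / (10 * (x * (x + 1) * (x + 2))) - 1 / (10 * ((x + 1) * (x + 2) * (x + 3))) = 3 / (10 * P)"
    unfolding P_def using assms by (simp add: divide_simps)
  have "3 * (2 * x + 1) ^ 4 - 2 * P = 46 * x ^ 4 + 84 * x ^ 3 + 50 * x\<^sup>2 + 12 * x + 3"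
    unfolding P_def by (simp add: algebra_simps power2_eq_square power3_eq_cube power4_eq_xxxx)
  moreover have "0 \<le> 46 * x ^ 4 + 84 * x ^ 3 + 50 * x\<^sup>2 + 12 * x + 3"
    using assms by simp
  ultimately have "2 * P \<le> 3 * (2 * x + 1) ^ 4"
    by linarith
  hence "3 / (15 * (2 * x + 1) ^ 4) \<le> 3 / (10 * P)"
    using P by (intro frac_le) auto
  thus ?thesis
    unfolding diff by simp
qed

lemma wallis_partial_product_eq:
  "(\<Prod>k=1..N. 4 * real k ^ 2 / (4 * real k ^ 2 - 1)) * (fact (2 * N))\<^sup>2 * (2 * real N + 1)
     = 2 ^ (4 * N) * (fact N) ^ 4"
proof (induction N)
  case 0
  show ?case by simp
next
  case (Suc N)
  define W where "W = (\<Prod>k=1..N. 4 * real k ^ 2 / (4 * real k ^ 2 - 1))"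
  define F where "F = (fact (2 * N) :: real)"
  define G where "G = (fact N :: real)"
  have IH: "W * F\<^sup>2 * (2 * real N + 1) = 2 ^ (4 * N) * G ^ 4"
    using Suc.IH unfolding W_def F_def G_def .
  have "4 * real (Suc N) ^ 2 - 1 = (2 * real N + 1) * (2 * real N + 3)"
    by (simp add: algebra_simps power2_eq_square)
  hence W_Suc: "(\<Prod>k=1..Suc N. 4 * real k ^ 2 / (4 * real k ^ 2 - 1))
      = W * (4 * (real N + 1)\<^sup>2 / ((2 * real N + 1) * (2 * real N + 3)))"
    unfolding W_def by (simp add: prod.nat_ivl_Suc' mult.commute)
  have F_Suc: "(fact (2 * Suc N) :: real) = (2 * real N + 2) * (2 * real N + 1) * F"
    unfolding F_def by (simp add: algebra_simps)
  have G_Suc: "(fact (Suc N) :: real) = (real N + 1) * G"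
    unfolding G_def by (simp add: algebra_simps)
  have nz: "2 * real N + 1 \<noteq> 0" "2 * real N + 3 \<noteq> 0"
    by (simp_all add: add_nonneg_eq_0_iff)
  have cancel: "W * (r / (u * v)) * (c * u * F)\<^sup>2 * v = (W * F\<^sup>2 * u) * (r * c\<^sup>2)"
    if "u \<noteq> 0" "v \<noteq> 0" for u v c r :: real
    using that by (simp add: field_simps power2_eq_square)
  have "W * (4 * (real N + 1)\<^sup>2 / ((2 * real N + 1) * (2 * real N + 3)))
        * ((2 * real N + 2) * (2 * real N + 1) * F)\<^sup>2 * (2 * real N + 3)
      = (W * F\<^sup>2 * (2 * real N + 1)) * (4 * (real N + 1)\<^sup>2 * (2 * real N + 2)\<^sup>2)"
    by (rule cancel[OF nz])
  also have "\<dots> = 2 ^ (4 * Suc N) * ((real N + 1) * G) ^ 4"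
    unfolding IH by (simp add: power_add power2_eq_square power4_eq_xxxx algebra_simps)
  finally show ?case
    unfolding W_Suc F_Suc G_Suc by (simp add: add.commute)
qed

lemma ln_wallis_partial_product:
  assumes "N \<ge> 1"
  shows "ln (\<Prod>k=1..N. 4 * real k ^ 2 / (4 * real k ^ 2 - 1))
    = 4 * stirling_err N - 2 * stirling_err (2 * N) + ln pi + (ln (real N) - ln (2 * real N + 1)) + 1 / (4 * real N)"
proof -
  define W where "W = (\<Prod>k=1..N. 4 * real k ^ 2 / (4 * real k ^ 2 - 1))"
  define F where "F = (fact (2 * N) :: real)"
  define G where "G = (fact N :: real)"
  define A where "A = ln (real N)"
  define c where "c = 1 / (12 * real N)"
  have N: "real N > 0"
    using assms by simp
  have pos: "F > 0" "G > 0"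
    unfolding F_def G_def by simp_all
  have "W * (F\<^sup>2 * (2 * real N + 1)) = 2 ^ (4 * N) * G ^ 4"
    using wallis_partial_product_eq[of N] unfolding W_def F_def G_def by (simp add: mult.assoc)
  hence "W = 2 ^ (4 * N) * G ^ 4 / (F\<^sup>2 * (2 * real N + 1))"
    using pos N by (simp add: eq_divide_eq)
  hence ln_W: "ln W = real (4 * N) * ln 2 + 4 * ln G - (2 * ln F + ln (2 * real N + 1))"
    using pos N by (simp add: ln_div ln_mult ln_realpow)
  have ln_2pi: "ln (2 * pi) = ln 2 + ln pi"
    by (simp add: ln_mult)
  have ln_G: "ln G = stirling_err N + ((real N + 1/2) * A - real N + (ln 2 + ln pi) / 2 + c)"
    unfolding stirling_err_def stirling_approx_def G_def A_def c_def ln_2pi by simp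
  have ln_F: "ln F = stirling_err (2 * N) + ((2 * real N + 1/2) * (ln 2 + A) - 2 * real N + (ln 2 + ln pi) / 2 + c / 2)"
  proof -
    have "ln (real (2 * N)) = ln 2 + A"
      unfolding A_def using N by (simp add: ln_mult)
    moreover have "1 / (12 * real (2 * N)) = c / 2"
      unfolding c_def by simp
    ultimately show ?thesis
      unfolding stirling_err_def stirling_approx_def F_def ln_2pi by simp
  qed
  have "1 / (4 * real N) = 3 * c"
    unfolding c_def by simp
  thus ?thesis
    unfolding W_def [symmetric] ln_W ln_G ln_F A_def [symmetric] by (simp add: field_simps)
qed

lemma stirling_err_limit_bound:
  obtains L where "stirling_err \<longlonglongrightarrow> L" "\<And>m. m \<ge> 1 \<Longrightarrow> \<bar>stirling_err m - L\<bar> \<le> 1 / (10 * real m ^ 3)"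
proof -
  define b where "b m = 1 / (10 * (real m * (real m + 1) * (real m + 2)))" for m
  have step: "\<bar>stirling_err m - stirling_err (Suc m)\<bar> \<le> b m - b (Suc m)" if "m \<ge> 1" for m
    using abs_stirling_err_diff_le[OF that] inverse_rising_diff_ge[of "real m"] that
    by (simp add: b_def algebra_simps)
  have lim: "b \<longlonglongrightarrow> 0"
    unfolding b_def by real_asymp
  obtain L where L: "stirling_err \<longlonglongrightarrow> L" "\<And>m. m \<ge> 1 \<Longrightarrow> \<bar>stirling_err m - L\<bar> \<le> b m"
    using telescoping_limit_bound[of stirling_err b, OF step lim] by blast
  have "b m \<le> 1 / (10 * real m ^ 3)" if "m \<ge> 1" for m
    unfolding b_def using that
    by (intro divide_left_mono mult_left_mono) (auto simp: power3_eq_cube intro!: mult_mono)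
  with L show ?thesis
    using that by force
qed

lemma stirling_err_tendsto_zero: "stirling_err \<longlonglongrightarrow> 0"
proof -
  obtain L where L: "stirling_err \<longlonglongrightarrow> L"
    using stirling_err_limit_bound by blast
  have L2: "(\<lambda>N. stirling_err (2 * N)) \<longlonglongrightarrow> L"
    using LIMSEQ_subseq_LIMSEQ[OF L, of "\<lambda>N. 2 * N"] by (simp add: strict_mono_def o_def)
  have "(\<lambda>N. ln (real N) - ln (2 * real N + 1)) \<longlonglongrightarrow> - ln 2"
    by real_asymp
  moreover have "(\<lambda>N. 1 / (4 * real N)) \<longlonglongrightarrow> 0"
    by real_asymp
  ultimately have "(\<lambda>N. 4 * stirling_err N - 2 * stirling_err (2 * N) + ln pi
      + (ln (real N) - ln (2 * real N + 1)) + 1 / (4 * real N)) \<longlonglongrightarrow> 4 * L - 2 * L + ln pi + - ln 2 + 0"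
    by (intro tendsto_add tendsto_diff tendsto_mult_left L L2 tendsto_const)
  moreover have "\<forall>\<^sub>F N in sequentially. 4 * stirling_err N - 2 * stirling_err (2 * N) + ln pi
      + (ln (real N) - ln (2 * real N + 1)) + 1 / (4 * real N)
      = ln (\<Prod>k=1..N. 4 * real k ^ 2 / (4 * real k ^ 2 - 1))"
    using eventually_ge_at_top[of "1::nat"] by eventually_elim (use ln_wallis_partial_product in auto)
  ultimately have "(\<lambda>N. ln (\<Prod>k=1..N. 4 * real k ^ 2 / (4 * real k ^ 2 - 1)))
      \<longlonglongrightarrow> 4 * L - 2 * L + ln pi + - ln 2 + 0"
    by (rule Lim_transform_eventually)
  moreover have "(\<lambda>N. ln (\<Prod>k=1..N. 4 * real k ^ 2 / (4 * real k ^ 2 - 1))) \<longlonglongrightarrow> ln (pi / 2)"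
    by (intro tendsto_intros wallis) simp
  ultimately have "4 * L - 2 * L + ln pi + - ln 2 + 0 = ln (pi / 2)"
    by (rule LIMSEQ_unique)
  hence "L = 0"
    by (simp add: ln_div)
  thus ?thesis
    using L by simp
qed

lemma abs_stirling_err_le:
  assumes "m \<ge> 1"
  shows "\<bar>stirling_err m\<bar> \<le> 1 / (10 * real m ^ 3)"
proof -
  obtain L where "stirling_err \<longlonglongrightarrow> L" "\<And>m. m \<ge> 1 \<Longrightarrow> \<bar>stirling_err m - L\<bar> \<le> 1 / (10 * real m ^ 3)"
    using stirling_err_limit_bound by blast
  moreover from this(1) have "L = 0"
    using stirling_err_tendsto_zero LIMSEQ_unique by blast
  ultimately show ?thesis
    using assms by simp
qed

lemma pmf_binomial_half:
  assumes "k \<le> n"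
  shows "pmf (binomial_pmf n (1/2)) k = real (n choose k) / 2 ^ n"
proof -
  have "pmf (binomial_pmf n (1/2)) k = real (n choose k) * (1/2) ^ k * (1 - 1/2) ^ (n - k)"
    by (rule pmf_binomial) auto
  also have "\<dots> = real (n choose k) * (1/2) ^ n"
    using assms by (simp add: mult.assoc power_add [symmetric])
  finally show ?thesis
    by (simp add: power_divide)
qed

lemma binom_info_eq:
  assumes "k \<le> n"
  shows "binom_info n k = real n * ln 2 - ln (real (n choose k))"
proof -
  have "real (n choose k) > 0"
    using assms by simp
  thus ?thesis
    unfolding binom_info_def pmf_binomial_half[OF assms] by (simp add: ln_div ln_realpow)
qed

lemma binom_info_eq_ln_fact:
  assumes "k \<le> n"
  shows "binom_info n k = real n * ln 2 - ln (fact n) + ln (fact k) + ln (fact (n - k))"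
proof -
  have "real (n choose k) = fact n / (fact k * fact (n - k))"
    using binomial_fact[OF assms] by simp
  thus ?thesis
    unfolding binom_info_eq[OF assms] by (simp add: ln_div ln_mult)
qed

lemma abs_binom_info_le:
  assumes "k \<le> n"
  shows "\<bar>binom_info n k\<bar> \<le> real n"
proof -
  have "1 \<le> real (n choose k)"
    using assms by (simp add: Suc_leI)
  moreover have "real (n choose k) \<le> 2 ^ n"
    using binomial_le_pow2[of n k] by (metis of_nat_le_iff of_nat_numeral of_nat_power)
  ultimately have "0 \<le> ln (real (n choose k))" "ln (real (n choose k)) \<le> ln (2 ^ n)"
    using assms by (simp, subst ln_le_cancel_iff) auto
  hence "0 \<le> ln (real (n choose k))" "ln (real (n choose k)) \<le> real n * ln 2"
    by (simp_all add: ln_realpow)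
  moreover have "real n * ln 2 \<le> real n"
    using ln_2_less_1 by (intro mult_left_le) auto
  ultimately show ?thesis
    unfolding binom_info_eq[OF assms] by auto
qed

definition rdev :: "nat \<Rightarrow> nat \<Rightarrow> real" where
  "rdev n k = 2 * dev n k / real n"

text \<open>Stirling's formula for the three factorials in \<open>binom_info n k\<close> and the Taylor expansions of
  \<open>(1 \<plusminus> x) ln (1 \<plusminus> x)\<close> at \<open>x = rdev n k\<close> produce this constant and even polynomial in \<open>x\<close>;
  what is left over, \<open>info_err\<close>, is \<open>n\<^sup>-\<^sup>3\<close> times a polynomial in \<open>zsq n k\<close>.\<close>

definition info_const :: "nat \<Rightarrow> real" where
  "info_const n = ln (pi * real n / 2) / 2 + 1 / (4 * real n)"

definition info_poly :: "nat \<Rightarrow> real \<Rightarrow> real" where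
  "info_poly n x = (real n / 2 - 1/2 + 1 / (3 * real n)) * x\<^sup>2 + (real n / 12 - 1/4) * x ^ 4 + real n / 30 * x ^ 6"

definition info_err :: "nat \<Rightarrow> nat \<Rightarrow> real" where
  "info_err n k = binom_info n k - info_const n - info_poly n (rdev n k)"

lemma stirling_approx_split:
  fixes N x :: real
  assumes "N > 0" "\<bar>x\<bar> < 1"
  shows "N * ln 2 - stirling_approx N + stirling_approx (N * (1 + x) / 2) + stirling_approx (N * (1 - x) / 2)
    = N / 2 * ((1 + x) * ln (1 + x) + (1 - x) * ln (1 - x)) + ln (pi * N / 2) / 2 + ln (1 - x\<^sup>2) / 2
      + (4 / (1 - x\<^sup>2) - 1) / (12 * N)"
proof -
  define K where "K = N * (1 + x) / 2"
  define M where "M = N * (1 - x) / 2"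
  have pos: "1 + x > 0" "1 - x > 0"
    using assms by auto
  have sq: "1 - x\<^sup>2 = (1 + x) * (1 - x)"
    by (simp add: algebra_simps power2_eq_square)
  have ln_K: "ln K = ln N + ln (1 + x) - ln 2" and ln_M: "ln M = ln N + ln (1 - x) - ln 2"
    unfolding K_def M_def using assms pos by (simp_all add: ln_div ln_mult)
  have ln_sq: "ln (1 - x\<^sup>2) = ln (1 + x) + ln (1 - x)"
    unfolding sq using pos by (simp add: ln_mult)
  have ln_pi: "ln (pi * N / 2) = ln pi + ln N - ln 2" "ln (2 * pi) = ln 2 + ln pi"
    using assms by (simp_all add: ln_div ln_mult)
  have logs: "(K + 1/2) * ln K + (M + 1/2) * ln M - (N + 1/2) * ln N + N * ln 2 + ln (2 * pi) / 2
      = N / 2 * ((1 + x) * ln (1 + x) + (1 - x) * ln (1 - x)) + ln (pi * N / 2) / 2 + ln (1 - x\<^sup>2) / 2"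
    unfolding ln_K ln_M ln_sq ln_pi unfolding K_def M_def
    by (simp add: algebra_simps add_divide_distrib diff_divide_distrib)
  have recips: "1 / (12 * K) + 1 / (12 * M) - 1 / (12 * N) = (4 / (1 - x\<^sup>2) - 1) / (12 * N)"
  proof -
    have "1 / (12 * K) = 1 / (6 * N) * (1 / (1 + x))" "1 / (12 * M) = 1 / (6 * N) * (1 / (1 - x))"
      unfolding K_def M_def by simp_all
    hence "1 / (12 * K) + 1 / (12 * M) - 1 / (12 * N) = 1 / (6 * N) * (1 / (1 + x) + 1 / (1 - x)) - 1 / (12 * N)"
      by (simp add: distrib_left)
    also have "1 / (1 + x) + 1 / (1 - x) = 2 / (1 - x\<^sup>2)"
      unfolding sq using pos by (simp add: field_simps)
    also have "1 / (6 * N) * (2 / (1 - x\<^sup>2)) - 1 / (12 * N) = (4 / (1 - x\<^sup>2) - 1) / (12 * N)"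
      by (simp add: diff_divide_distrib)
    finally show ?thesis .
  qed
  have "K + M = N"
    unfolding K_def M_def by (simp add: field_simps)
  with logs recips show ?thesis
    unfolding stirling_approx_def K_def [symmetric] M_def [symmetric] by linarith
qed

lemma binom_info_decomp:
  assumes "0 < k" "k < n"
  defines "x \<equiv> rdev n k"
  shows "info_err n k = real n / 2 * xlnx_taylor_rem x + ln_one_minus_sq_taylor_rem x / 2
      + x ^ 4 / (3 * real n * (1 - x\<^sup>2)) + (stirling_err k + stirling_err (n - k) - stirling_err n)"
proof -
  define N where "N = real n"
  have N: "N > 0"
    using assms unfolding N_def by simp
  have k: "real k = N * (1 + x) / 2" and nk: "real (n - k) = N * (1 - x) / 2"
    using assms unfolding x_def rdev_def dev_def N_def by (simp_all add: of_nat_diff field_simps)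
  have "\<bar>2 * real k - N\<bar> < N"
    using assms unfolding N_def by (auto simp: abs_less_iff)
  moreover have "x = (2 * real k - N) / N"
    using assms unfolding x_def rdev_def dev_def N_def by (simp add: field_simps)
  ultimately have x: "\<bar>x\<bar> < 1"
    using N by simp
  have "binom_info n k = N * ln 2 - stirling_approx N + stirling_approx (real k) + stirling_approx (real (n - k))
      + (stirling_err k + stirling_err (n - k) - stirling_err n)"
    using assms unfolding binom_info_eq_ln_fact[OF less_imp_le[OF assms(2)]] stirling_err_def N_def by simp
  also have "N * ln 2 - stirling_approx N + stirling_approx (real k) + stirling_approx (real (n - k))
      = N / 2 * ((1 + x) * ln (1 + x) + (1 - x) * ln (1 - x)) + ln (pi * N / 2) / 2 + ln (1 - x\<^sup>2) / 2
        + (4 / (1 - x\<^sup>2) - 1) / (12 * N)"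
    unfolding k nk by (rule stirling_approx_split[OF N x])
  also have "\<dots> = info_const n + info_poly n x + (N / 2 * xlnx_taylor_rem x
      + ln_one_minus_sq_taylor_rem x / 2 + x ^ 4 / (3 * N * (1 - x\<^sup>2)))"
  proof -
    have "1 - x\<^sup>2 \<noteq> 0"
      using x abs_square_less_1[of x] by linarith
    thus ?thesis
      unfolding info_const_def info_poly_def xlnx_taylor_rem_def ln_one_minus_sq_taylor_rem_def N_def [symmetric]
      using N by (simp add: field_simps)
  qed
  finally show ?thesis
    unfolding info_err_def x_def N_def by simp
qed

lemma rdev_square: "n \<ge> 1 \<Longrightarrow> (rdev n k)\<^sup>2 = zsq n k / real n"
  unfolding rdev_def zsq_def by (simp add: power2_eq_square field_simps)

lemma rdev_even_power: "n \<ge> 1 \<Longrightarrow> rdev n k ^ (2 * j) = zsq n k ^ j / real n ^ j"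
  by (simp add: power_mult rdev_square power_divide)

lemma abs_rdev_le_1: "k \<le> n \<Longrightarrow> \<bar>rdev n k\<bar> \<le> 1"
  unfolding rdev_def dev_def by (cases "n = 0") (auto simp: abs_le_iff field_simps)

lemma abs_info_const_le:
  assumes "n \<ge> 1"
  shows "\<bar>info_const n\<bar> \<le> 2 * real n"
proof -
  have N: "real n \<ge> 1"
    using assms by simp
  have "pi * real n \<ge> 3 * 1"
    using pi_gt3 N by (intro mult_mono) auto
  hence "0 \<le> ln (pi * real n / 2)" "ln (pi * real n / 2) \<le> pi * real n / 2 - 1"
    by (simp_all add: ln_le_minus_one)
  moreover have "pi * real n \<le> 4 * real n"
    using pi_less_4 N by (intro mult_right_mono) auto
  moreover have "0 \<le> 1 / (4 * real n)" "1 / (4 * real n) \<le> 1"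
    using N by simp_all
  ultimately show ?thesis
    unfolding info_const_def abs_le_iff by linarith
qed

lemma abs_info_poly_le:
  assumes "n \<ge> 1" "\<bar>x\<bar> \<le> 1"
  shows "\<bar>info_poly n x\<bar> \<le> 3 * real n * x\<^sup>2"
proof -
  define a b c where "a = real n / 2 - 1/2 + 1 / (3 * real n)" "b = real n / 12 - 1/4" "c = real n / 30"
  have N: "real n \<ge> 1"
    using assms by simp
  have "0 \<le> 1 / (3 * real n)" "1 / (3 * real n) \<le> 1"
    using N by simp_all
  hence coeffs: "\<bar>a\<bar> \<le> real n" "\<bar>b\<bar> \<le> real n" "\<bar>c\<bar> \<le> real n"
    using N unfolding a_b_c_def abs_le_iff by linarith+
  have x2: "x\<^sup>2 \<le> 1"
    using assms by (simp add: abs_square_le_1)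
  have "x\<^sup>2 * x\<^sup>2 \<le> x\<^sup>2 * 1" "x\<^sup>2 * x\<^sup>2 * x\<^sup>2 \<le> 1 * 1 * x\<^sup>2"
    using x2 by (intro mult_left_mono mult_right_mono mult_mono; simp)+
  hence "x ^ 4 \<le> x\<^sup>2" "x ^ 6 \<le> x\<^sup>2"
    by (simp_all add: power_eq_if)
  moreover have "0 \<le> x ^ 4" "0 \<le> x ^ 6"
    by simp_all
  ultimately have powers: "\<bar>x ^ 4\<bar> \<le> x\<^sup>2" "\<bar>x ^ 6\<bar> \<le> x\<^sup>2"
    by simp_all
  have "\<bar>info_poly n x\<bar> \<le> \<bar>a\<bar> * \<bar>x\<^sup>2\<bar> + \<bar>b\<bar> * \<bar>x ^ 4\<bar> + \<bar>c\<bar> * \<bar>x ^ 6\<bar>"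
    unfolding info_poly_def a_b_c_def [symmetric] abs_mult [symmetric]
    by (rule order_trans[OF abs_triangle_ineq add_right_mono[OF abs_triangle_ineq]])
  also have "\<dots> \<le> real n * x\<^sup>2 + real n * x\<^sup>2 + real n * x\<^sup>2"
    using coeffs powers by (intro add_mono mult_mono) auto
  finally show ?thesis
    by simp
qed

lemma abs_stirling_err_le_quarter:
  assumes "real n / 4 \<le> real m" "n \<ge> 1"
  shows "\<bar>stirling_err m\<bar> \<le> 7 / real n ^ 3"
proof -
  have "m \<ge> 1"
    using assms by (cases m) auto
  hence "\<bar>stirling_err m\<bar> \<le> 1 / (10 * real m ^ 3)"
    by (rule abs_stirling_err_le)
  also have "\<dots> \<le> 1 / (10 * (real n / 4) ^ 3)"
    using assms by (intro divide_left_mono mult_left_mono power_mono) auto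
  also have "\<dots> \<le> 7 / real n ^ 3"
    using assms by (simp add: field_simps)
  finally show ?thesis .
qed

lemma abs_info_err_le_central:
  assumes n: "n \<ge> 1" and k: "k \<le> n" and x: "\<bar>rdev n k\<bar> \<le> 1/2"
  shows "\<bar>info_err n k\<bar> \<le> 15 * (1 + zsq n k) ^ 4 / real n ^ 3"
proof -
  define X Y N where "X = rdev n k" and "Y = zsq n k" and "N = real n"
  have N: "N \<ge> 1"
    using n unfolding N_def by simp
  have Y: "Y \<ge> 0"
    unfolding Y_def by (rule zsq_nonneg)
  have X_pow: "X ^ (2 * j) = Y ^ j / N ^ j" for j
    unfolding X_def Y_def N_def using rdev_even_power[OF n] .
  have "\<bar>2 * real k - N\<bar> \<le> N / 2"
  proof -
    have "2 * real k - N = N * X"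
      using n unfolding X_def rdev_def dev_def N_def by (simp add: field_simps)
    hence "\<bar>2 * real k - N\<bar> = N * \<bar>X\<bar>"
      using N by (simp add: abs_mult)
    also have "\<dots> \<le> N * (1/2)"
      using x N unfolding X_def [symmetric] by (intro mult_left_mono) auto
    finally show ?thesis
      by simp
  qed
  moreover have "real (n - k) = N - real k"
    using k unfolding N_def by (simp add: of_nat_diff)
  ultimately have quarter: "N / 4 \<le> real k" "N / 4 \<le> real (n - k)"
    unfolding abs_le_iff by linarith+
  hence "0 < k" "k < n"
    using N unfolding N_def by auto
  hence decomp: "info_err n k = N / 2 * xlnx_taylor_rem X + ln_one_minus_sq_taylor_rem X / 2
      + X ^ 4 / (3 * N * (1 - X\<^sup>2)) + (stirling_err k + stirling_err (n - k) - stirling_err n)"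
    unfolding X_def N_def by (rule binom_info_decomp)
  have "\<bar>N / 2 * xlnx_taylor_rem X\<bar> \<le> N / 2 * (3 * X ^ 8 / 56)"
    using abs_xlnx_taylor_rem_le[OF x [folded X_def]] N by (simp add: abs_mult)
  also have "\<dots> = 3 / 112 * (Y ^ 4 / N ^ 3)"
    unfolding X_pow[of 4, simplified] using N by (simp add: field_simps power_eq_if)
  also have "\<dots> \<le> Y ^ 4 / N ^ 3"
    using Y N by (intro mult_left_le_one_le) auto
  finally have term1: "\<bar>N / 2 * xlnx_taylor_rem X\<bar> \<le> Y ^ 4 / N ^ 3" .
  have "\<bar>ln_one_minus_sq_taylor_rem X / 2\<bar> \<le> X ^ 6 / 4"
    using abs_ln_one_minus_sq_taylor_rem_le[OF x [folded X_def]] by simp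
  also have "\<dots> \<le> X ^ 6"
    by simp
  also have "\<dots> = Y ^ 3 / N ^ 3"
    using X_pow[of 3] by simp
  finally have term2: "\<bar>ln_one_minus_sq_taylor_rem X / 2\<bar> \<le> Y ^ 3 / N ^ 3" .
  have "\<bar>X\<bar>\<^sup>2 \<le> (1/2)\<^sup>2"
    using x unfolding X_def [symmetric] by (intro power_mono) auto
  hence "X\<^sup>2 \<le> 1/4"
    by (simp add: power2_eq_square)
  hence "N \<le> 3 * N * (1 - X\<^sup>2)"
    using N by (simp add: algebra_simps)
  hence "\<bar>X ^ 4 / (3 * N * (1 - X\<^sup>2))\<bar> \<le> X ^ 4 / N"
    using N by (simp add: frac_le)
  also have "\<dots> = Y\<^sup>2 / N ^ 3"
    using X_pow[of 2] N by (simp add: field_simps power_eq_if)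
  finally have term3: "\<bar>X ^ 4 / (3 * N * (1 - X\<^sup>2))\<bar> \<le> Y\<^sup>2 / N ^ 3" .
  have "\<bar>stirling_err k\<bar> \<le> 7 / N ^ 3" "\<bar>stirling_err (n - k)\<bar> \<le> 7 / N ^ 3"
    using quarter n abs_stirling_err_le_quarter unfolding N_def by blast+
  moreover have "\<bar>stirling_err n\<bar> \<le> 1 / N ^ 3"
    using abs_stirling_err_le[OF n] N unfolding N_def by (simp add: field_simps)
  ultimately have "\<bar>info_err n k\<bar> \<le> (Y ^ 4 + Y ^ 3 + Y\<^sup>2 + 15) / N ^ 3"
    using term1 term2 term3 unfolding decomp add_divide_distrib abs_le_iff by linarith
  also have "\<dots> \<le> 15 * (1 + Y) ^ 4 / N ^ 3"
  proof (rule divide_right_mono)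
    have "15 * (1 + Y) ^ 4 = 15 + 60 * Y + 90 * Y\<^sup>2 + 60 * Y ^ 3 + 15 * Y ^ 4"
      by (simp add: algebra_simps power2_eq_square power3_eq_cube power4_eq_xxxx)
    thus "Y ^ 4 + Y ^ 3 + Y\<^sup>2 + 15 \<le> 15 * (1 + Y) ^ 4"
      using Y by simp
  qed (use N in simp)
  finally show ?thesis
    unfolding Y_def N_def .
qed

text \<open>Away from the centre the crude bound \<open>\<bar>info_err\<bar> = O(n)\<close> suffices, because there
  \<open>zsq\<close> is itself of order \<open>n\<close>.\<close>

lemma abs_info_err_le:
  assumes n: "n \<ge> 1" and k: "k \<le> n"
  shows "\<bar>info_err n k\<bar> \<le> 1536 * (1 + zsq n k) ^ 4 / real n ^ 3"
proof (cases "\<bar>rdev n k\<bar> \<le> 1/2")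
  case True
  have "\<bar>info_err n k\<bar> \<le> 15 * (1 + zsq n k) ^ 4 / real n ^ 3"
    by (rule abs_info_err_le_central[OF n k True])
  also have "\<dots> \<le> 1536 * (1 + zsq n k) ^ 4 / real n ^ 3"
    using zsq_nonneg[of n k] by (intro divide_right_mono mult_right_mono) auto
  finally show ?thesis .
next
  case False
  define Y N where "Y = zsq n k" and "N = real n"
  have N: "N \<ge> 1"
    using n unfolding N_def by simp
  have Y: "Y = N * (rdev n k)\<^sup>2"
    unfolding Y_def N_def using rdev_square[OF n, of k] n by simp
  have "(1/2)\<^sup>2 \<le> \<bar>rdev n k\<bar>\<^sup>2"
    using False by (intro power_mono) auto
  hence "N / 4 \<le> Y"
    unfolding Y using N by (simp add: power2_eq_square)
  moreover have "Y \<le> N"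
    unfolding Y using N abs_rdev_le_1[OF k] by (simp add: abs_square_le_1)
  ultimately have "\<bar>info_err n k\<bar> \<le> 6 * N"
    using abs_binom_info_le[OF k] abs_info_const_le[OF n] abs_info_poly_le[OF n abs_rdev_le_1[OF k]]
    unfolding info_err_def Y N_def by (simp add: abs_le_iff)
  also have "\<dots> = 6 * N ^ 4 / N ^ 3"
    using N by (simp add: power_eq_if)
  also have "\<dots> \<le> 6 * (4 * Y) ^ 4 / N ^ 3"
    using \<open>N / 4 \<le> Y\<close> N by (intro divide_right_mono mult_left_mono power_mono) auto
  also have "\<dots> \<le> 1536 * (1 + Y) ^ 4 / N ^ 3"
    using \<open>N / 4 \<le> Y\<close> N by (intro divide_right_mono) (auto intro!: power_mono)
  finally show ?thesis
    unfolding Y_def N_def .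
qed

lemma binomial_mean_rdev_powers:
  assumes "n \<ge> 1"
  shows "binomial_mean n (\<lambda>k. rdev n k ^ 2) = 1 / real n"
    and "binomial_mean n (\<lambda>k. rdev n k ^ 4) = (3 * real n ^ 2 - 2 * real n) / real n ^ 4"
    and "binomial_mean n (\<lambda>k. rdev n k ^ 6) = (15 * real n ^ 3 - 30 * real n ^ 2 + 16 * real n) / real n ^ 6"
    and "binomial_mean n (\<lambda>k. rdev n k ^ 8)
      = (105 * real n ^ 4 - 420 * real n ^ 3 + 588 * real n ^ 2 - 272 * real n) / real n ^ 8"
proof -
  have N: "real n > 0"
    using assms by simp
  have pow: "rdev n k ^ j = (2 / real n) ^ j * dev n k ^ j" for k j
    unfolding rdev_def by (simp add: power_mult_distrib power_divide field_simps)
  note m = binomial_central_moments[of n]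
  show "binomial_mean n (\<lambda>k. rdev n k ^ 2) = 1 / real n"
    unfolding pow binomial_mean_cmult m[THEN conjunct1]
    using N by (simp add: power_divide field_simps power2_eq_square)
  show "binomial_mean n (\<lambda>k. rdev n k ^ 4) = (3 * real n ^ 2 - 2 * real n) / real n ^ 4"
    unfolding pow binomial_mean_cmult m[THEN conjunct2, THEN conjunct1]
    using N by (simp add: power_divide field_simps)
  show "binomial_mean n (\<lambda>k. rdev n k ^ 6) = (15 * real n ^ 3 - 30 * real n ^ 2 + 16 * real n) / real n ^ 6"
    unfolding pow binomial_mean_cmult m[THEN conjunct2, THEN conjunct2, THEN conjunct1]
    using N by (simp add: power_divide field_simps)
  show "binomial_mean n (\<lambda>k. rdev n k ^ 8)
      = (105 * real n ^ 4 - 420 * real n ^ 3 + 588 * real n ^ 2 - 272 * real n) / real n ^ 8"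
    unfolding pow binomial_mean_cmult m[THEN conjunct2, THEN conjunct2, THEN conjunct2]
    using N by (simp add: power_divide field_simps)
qed

lemma binomial_mean_info_poly:
  assumes "n \<ge> 1"
  shows "binomial_mean n (\<lambda>k. info_poly n (rdev n k))
    = (real n / 2 - 1/2 + 1 / (3 * real n)) * (1 / real n)
      + (real n / 12 - 1/4) * ((3 * real n ^ 2 - 2 * real n) / real n ^ 4)
      + real n / 30 * ((15 * real n ^ 3 - 30 * real n ^ 2 + 16 * real n) / real n ^ 6)"
  unfolding info_poly_def binomial_mean_add binomial_mean_cmult binomial_mean_rdev_powers[OF assms] ..

lemma binom_entropy_expansion:
  assumes "n \<ge> 1"
  shows "binom_entropy n - (1/2 * ln (pi * exp 1 * real n / 2) - 1 / (12 * (real n)\<^sup>2))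
    = - 1 / (2 * real n ^ 3) + 8 / (15 * real n ^ 4) + binomial_mean n (info_err n)"
proof -
  have N: "real n > 0"
    using assms by simp
  have "binom_entropy n = binomial_mean n (\<lambda>k. info_const n + info_poly n (rdev n k) + info_err n k)"
    unfolding binom_entropy_def expectation_binomial_half by (rule binomial_mean_cong) (simp add: info_err_def)
  also have "\<dots> = info_const n + binomial_mean n (\<lambda>k. info_poly n (rdev n k)) + binomial_mean n (info_err n)"
    by (simp add: binomial_mean_add binomial_mean_const)
  finally have entropy: "binom_entropy n = \<dots>" .
  have "pi * exp 1 * real n / 2 = exp 1 * (pi * real n / 2)"
    by simp
  also have "ln \<dots> = 1 + ln (pi * real n / 2)"
    using N by (subst ln_mult) auto
  finally have "ln (pi * exp 1 * real n / 2) = 1 + ln (pi * real n / 2)" .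
  thus ?thesis
    unfolding entropy binomial_mean_info_poly[OF assms] info_const_def
    using N
    by (simp add: field_simps) (simp add: algebra_simps power2_eq_square power3_eq_cube power4_eq_xxxx power_eq_if)
qed

lemma bigo_inverse_power_intro:
  fixes f :: "nat \<Rightarrow> real"
  assumes "\<And>n. n \<ge> 1 \<Longrightarrow> \<bar>f n\<bar> \<le> C / real n ^ j"
  shows "f \<in> O(\<lambda>n. 1 / real n ^ j)"
proof (rule bigoI)
  show "\<forall>\<^sub>F n in at_top. norm (f n) \<le> C * norm (1 / real n ^ j)"
    using eventually_ge_at_top[of "1::nat"] by eventually_elim (use assms in simp)
qed

lemma bigo_cong_ge_1:
  fixes f g h :: "nat \<Rightarrow> real"
  assumes "g \<in> O(h)" and "\<And>n. n \<ge> 1 \<Longrightarrow> f n = g n"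
  shows "f \<in> O(h)"
proof -
  have "\<forall>\<^sub>F n in at_top. f n = g n"
    using eventually_ge_at_top[of "1::nat"] by eventually_elim (rule assms(2))
  thus ?thesis
    using assms(1) landau_o.big.in_cong by blast
qed

lemma abs_info_poly_rdev_le: "n \<ge> 1 \<Longrightarrow> k \<le> n \<Longrightarrow> \<bar>info_poly n (rdev n k)\<bar> \<le> 3 * (1 + zsq n k)"
  using abs_info_poly_le[of n "rdev n k"] abs_rdev_le_1[of k n] rdev_square[of n k] zsq_nonneg[of n k]
  by simp

lemma binomial_mean_info_err_bigo: "(\<lambda>n. binomial_mean n (info_err n)) \<in> O(\<lambda>n. 1 / real n ^ 3)"
proof -
  obtain K where K: "\<And>n. n \<ge> 1 \<Longrightarrow> binomial_mean n (\<lambda>k. (1 + zsq n k) ^ 4) \<le> K"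
    using binomial_mean_one_plus_zsq_power_bounded by blast
  show ?thesis
  proof (rule bigo_inverse_power_intro)
    fix n :: nat
    assume n: "n \<ge> 1"
    have "\<bar>binomial_mean n (info_err n)\<bar> \<le> binomial_mean n (\<lambda>k. 1536 / real n ^ 3 * (1 + zsq n k) ^ 4)"
      by (rule binomial_mean_abs_le) (use abs_info_err_le[OF n] in simp)
    also have "\<dots> \<le> 1536 / real n ^ 3 * K"
      unfolding binomial_mean_cmult using K[OF n] by (intro mult_left_mono) auto
    finally show "\<bar>binomial_mean n (info_err n)\<bar> \<le> 1536 * K / real n ^ 3"
      by simp
  qed
qed

lemma binomial_mean_variance_add:
  fixes n :: nat and c :: real and g e :: "nat \<Rightarrow> real"
  defines "G \<equiv> binomial_mean n g" and "E \<equiv> binomial_mean n e"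
  shows "binomial_mean n (\<lambda>k. (c + g k + e k - binomial_mean n (\<lambda>k. c + g k + e k))\<^sup>2)
    = (binomial_mean n (\<lambda>k. (g k)\<^sup>2) - G\<^sup>2) + 2 * binomial_mean n (\<lambda>k. (g k - G) * e k)
      + binomial_mean n (\<lambda>k. (e k - E)\<^sup>2)"
proof -
  have mean: "binomial_mean n (\<lambda>k. c + g k + e k) = c + G + E"
    unfolding G_def E_def by (simp add: binomial_mean_add binomial_mean_const)
  have "binomial_mean n (\<lambda>k. (c + g k + e k - (c + G + E))\<^sup>2)
      = binomial_mean n (\<lambda>k. (g k - G)\<^sup>2 + 2 * ((g k - G) * e k - E * (g k - G)) + (e k - E)\<^sup>2)"
    by (rule binomial_mean_cong) (simp add: power2_eq_square algebra_simps)
  also have "\<dots> = binomial_mean n (\<lambda>k. (g k - G)\<^sup>2)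
      + 2 * (binomial_mean n (\<lambda>k. (g k - G) * e k) - E * binomial_mean n (\<lambda>k. g k - G))
      + binomial_mean n (\<lambda>k. (e k - E)\<^sup>2)"
    by (simp only: binomial_mean_add binomial_mean_diff binomial_mean_cmult)
  also have "binomial_mean n (\<lambda>k. g k - G) = 0"
    unfolding G_def by (simp add: binomial_mean_diff binomial_mean_const)
  also have "binomial_mean n (\<lambda>k. (g k - G)\<^sup>2) = binomial_mean n (\<lambda>k. (g k)\<^sup>2) - G\<^sup>2"
    unfolding binomial_mean_square_diff G_def by (simp add: power2_eq_square)
  finally show ?thesis
    unfolding mean by simp
qed

lemma info_poly_info_err_covariance_bigo:
  "(\<lambda>n. binomial_mean n (\<lambda>k. (info_poly n (rdev n k) - binomial_mean n (\<lambda>k. info_poly n (rdev n k)))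
      * info_err n k)) \<in> O(\<lambda>n. 1 / real n ^ 3)"
proof -
  obtain K1 where K1: "\<And>n. n \<ge> 1 \<Longrightarrow> binomial_mean n (\<lambda>k. (1 + zsq n k) ^ 1) \<le> K1"
    using binomial_mean_one_plus_zsq_power_bounded by blast
  obtain K5 where K5: "\<And>n. n \<ge> 1 \<Longrightarrow> binomial_mean n (\<lambda>k. (1 + zsq n k) ^ 5) \<le> K5"
    using binomial_mean_one_plus_zsq_power_bounded by blast
  define C where "C = 3 * (1 + \<bar>K1\<bar>) * 1536"
  show ?thesis
  proof (rule bigo_inverse_power_intro)
    fix n :: nat
    assume n: "n \<ge> 1"
    define g G where "g k = info_poly n (rdev n k)" and "G = binomial_mean n g" for k
    have "\<bar>G\<bar> \<le> binomial_mean n (\<lambda>k. 3 * (1 + zsq n k) ^ 1)"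
      unfolding G_def g_def by (rule binomial_mean_abs_le) (use abs_info_poly_rdev_le[OF n] in simp)
    also have "\<dots> \<le> 3 * \<bar>K1\<bar>"
      unfolding binomial_mean_cmult using K1[OF n] by simp
    finally have G: "\<bar>G\<bar> \<le> 3 * \<bar>K1\<bar>" .
    have "\<bar>(g k - G) * info_err n k\<bar> \<le> C / real n ^ 3 * (1 + zsq n k) ^ 5" if k: "k \<le> n" for k
    proof -
      have Y: "0 \<le> zsq n k"
        by (rule zsq_nonneg)
      have "\<bar>g k - G\<bar> \<le> 3 * (1 + zsq n k) + 3 * \<bar>K1\<bar>"
        using abs_triangle_ineq4[of "g k" G] abs_info_poly_rdev_le[OF n k] G unfolding g_def by linarith
      also have "\<dots> \<le> 3 * (1 + \<bar>K1\<bar>) * (1 + zsq n k)"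
        using Y by (simp add: algebra_simps)
      finally have "\<bar>g k - G\<bar> \<le> 3 * (1 + \<bar>K1\<bar>) * (1 + zsq n k)" .
      hence "\<bar>(g k - G) * info_err n k\<bar>
          \<le> 3 * (1 + \<bar>K1\<bar>) * (1 + zsq n k) * (1536 * (1 + zsq n k) ^ 4 / real n ^ 3)"
        unfolding abs_mult using abs_info_err_le[OF n k] Y by (intro mult_mono) auto
      moreover have "(1 + zsq n k) ^ 5 = (1 + zsq n k) * (1 + zsq n k) ^ 4"
        by (simp add: numeral_eq_Suc)
      ultimately show ?thesis
        unfolding C_def by (simp add: mult_ac)
    qed
    hence "\<bar>binomial_mean n (\<lambda>k. (g k - G) * info_err n k)\<bar>
        \<le> binomial_mean n (\<lambda>k. C / real n ^ 3 * (1 + zsq n k) ^ 5)"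
      by (rule binomial_mean_abs_le)
    also have "\<dots> \<le> C / real n ^ 3 * K5"
      unfolding binomial_mean_cmult C_def using K5[OF n] by (intro mult_left_mono) auto
    finally show "\<bar>binomial_mean n (\<lambda>k. (g k - G) * info_err n k)\<bar> \<le> C * K5 / real n ^ 3"
      by simp
  qed
qed

lemma info_err_variance_bigo:
  "(\<lambda>n. binomial_mean n (\<lambda>k. (info_err n k - binomial_mean n (info_err n))\<^sup>2)) \<in> O(\<lambda>n. 1 / real n ^ 3)"
proof -
  obtain K where K: "\<And>n. n \<ge> 1 \<Longrightarrow> binomial_mean n (\<lambda>k. (1 + zsq n k) ^ 8) \<le> K"
    using binomial_mean_one_plus_zsq_power_bounded by blast
  show ?thesis
  proof (rule bigo_inverse_power_intro)
    fix n :: nat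
    assume n: "n \<ge> 1"
    have N: "real n \<ge> 1"
      using n by simp
    have "0 \<le> binomial_mean n (\<lambda>k. (info_err n k - binomial_mean n (info_err n))\<^sup>2)"
      by (rule binomial_mean_nonneg) simp
    moreover have "binomial_mean n (\<lambda>k. (info_err n k - binomial_mean n (info_err n))\<^sup>2)
        \<le> binomial_mean n (\<lambda>k. (info_err n k)\<^sup>2)"
      unfolding binomial_mean_square_diff by (simp add: power2_eq_square)
    moreover have "binomial_mean n (\<lambda>k. (info_err n k)\<^sup>2)
        \<le> binomial_mean n (\<lambda>k. 1536\<^sup>2 / real n ^ 6 * (1 + zsq n k) ^ 8)"
    proof (rule binomial_mean_mono)
      fix k
      assume "k \<le> n"
      hence "\<bar>info_err n k\<bar>\<^sup>2 \<le> (1536 * (1 + zsq n k) ^ 4 / real n ^ 3)\<^sup>2"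
        using abs_info_err_le[OF n] by (intro power_mono) auto
      thus "(info_err n k)\<^sup>2 \<le> 1536\<^sup>2 / real n ^ 6 * (1 + zsq n k) ^ 8"
        by (simp add: power_divide power_mult_distrib power_mult [symmetric])
    qed
    moreover have "binomial_mean n (\<lambda>k. 1536\<^sup>2 / real n ^ 6 * (1 + zsq n k) ^ 8) \<le> 1536\<^sup>2 * K / real n ^ 3"
    proof -
      have "binomial_mean n (\<lambda>k. 1536\<^sup>2 / real n ^ 6 * (1 + zsq n k) ^ 8) \<le> 1536\<^sup>2 / real n ^ 6 * K"
        unfolding binomial_mean_cmult using K[OF n] by (intro mult_left_mono) auto
      also have "\<dots> \<le> 1536\<^sup>2 / real n ^ 3 * K"
        using N K[OF n] binomial_mean_nonneg[of n "\<lambda>k. (1 + zsq n k) ^ 8"] zsq_nonneg[of n]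
        by (intro mult_right_mono divide_left_mono power_increasing) auto
      finally show ?thesis
        by simp
    qed
    ultimately show "\<bar>binomial_mean n (\<lambda>k. (info_err n k - binomial_mean n (info_err n))\<^sup>2)\<bar>
        \<le> 1536\<^sup>2 * K / real n ^ 3"
      by simp
  qed
qed

lemma binomial_mean_rdev_even_power_bounded:
  "\<exists>K. \<forall>n\<ge>1. \<bar>binomial_mean n (\<lambda>k. rdev n k ^ (2 * j))\<bar> \<le> K / real n ^ j"
proof -
  obtain K where K: "\<And>n. n \<ge> 1 \<Longrightarrow> binomial_mean n (\<lambda>k. (1 + zsq n k) ^ j) \<le> K"
    using binomial_mean_one_plus_zsq_power_bounded by blast
  have "\<bar>binomial_mean n (\<lambda>k. rdev n k ^ (2 * j))\<bar> \<le> K / real n ^ j" if n: "n \<ge> 1" for n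
  proof -
    have "\<bar>binomial_mean n (\<lambda>k. rdev n k ^ (2 * j))\<bar> \<le> binomial_mean n (\<lambda>k. (1 + zsq n k) ^ j / real n ^ j)"
    proof (rule binomial_mean_abs_le)
      fix k
      have "zsq n k ^ j \<le> (1 + zsq n k) ^ j"
        using zsq_nonneg[of n k] by (intro power_mono) auto
      thus "\<bar>rdev n k ^ (2 * j)\<bar> \<le> (1 + zsq n k) ^ j / real n ^ j"
        unfolding rdev_even_power[OF n] using zsq_nonneg[of n k] by (simp add: divide_right_mono)
    qed
    also have "\<dots> \<le> K / real n ^ j"
      using K[OF n] by (simp add: binomial_mean_multc [of n _ "1 / real n ^ j", simplified] divide_right_mono)
    finally show ?thesis .
  qed
  thus ?thesis
    by blast
qed

lemma info_poly_higher_moments_bigo: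
  "(\<lambda>n. 2 * (real n / 12 - 1/4) * (real n / 30) * binomial_mean n (\<lambda>k. rdev n k ^ 10)
      + (real n / 30)\<^sup>2 * binomial_mean n (\<lambda>k. rdev n k ^ 12)) \<in> O(\<lambda>n. 1 / real n ^ 3)"
proof -
  obtain K5 where K5: "\<And>n. n \<ge> 1 \<Longrightarrow> \<bar>binomial_mean n (\<lambda>k. rdev n k ^ 10)\<bar> \<le> K5 / real n ^ 5"
    using binomial_mean_rdev_even_power_bounded[of 5] by auto
  obtain K6 where K6: "\<And>n. n \<ge> 1 \<Longrightarrow> \<bar>binomial_mean n (\<lambda>k. rdev n k ^ 12)\<bar> \<le> K6 / real n ^ 6"
    using binomial_mean_rdev_even_power_bounded[of 6] by auto
  show ?thesis
  proof (rule bigo_inverse_power_intro)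
    fix n :: nat
    assume n: "n \<ge> 1"
    define N where "N = real n"
    have N: "N \<ge> 1"
      using n unfolding N_def by simp
    have coeffs: "\<bar>2 * (N / 12 - 1/4) * (N / 30)\<bar> \<le> N\<^sup>2" "\<bar>(N / 30)\<^sup>2\<bar> \<le> N\<^sup>2"
      using N by (auto simp: abs_mult abs_le_iff power2_eq_square intro!: mult_mono)
    have "\<bar>2 * (N / 12 - 1/4) * (N / 30) * binomial_mean n (\<lambda>k. rdev n k ^ 10)\<bar> \<le> N\<^sup>2 * (K5 / N ^ 5)"
      unfolding abs_mult [of _ "binomial_mean _ _"]
      using coeffs K5[OF n] N unfolding N_def by (intro mult_mono) auto
    also have "\<dots> = K5 / N ^ 3"
      using N by (simp add: power_eq_if)
    finally have t10: "\<bar>2 * (N / 12 - 1/4) * (N / 30) * binomial_mean n (\<lambda>k. rdev n k ^ 10)\<bar> \<le> K5 / N ^ 3" .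
    have "\<bar>(N / 30)\<^sup>2 * binomial_mean n (\<lambda>k. rdev n k ^ 12)\<bar> \<le> N\<^sup>2 * (\<bar>K6\<bar> / N ^ 6)"
      unfolding abs_mult [of _ "binomial_mean _ _"]
      using coeffs order_trans[OF K6[OF n] divide_right_mono[OF abs_ge_self]] N unfolding N_def
      by (intro mult_mono) auto
    also have "\<dots> = \<bar>K6\<bar> / N ^ 3 / N"
      using N by (simp add: power_eq_if)
    also have "\<dots> \<le> \<bar>K6\<bar> / N ^ 3"
      using divide_left_mono[of 1 N "\<bar>K6\<bar> / N ^ 3"] N by simp
    finally have t12: "\<bar>(N / 30)\<^sup>2 * binomial_mean n (\<lambda>k. rdev n k ^ 12)\<bar> \<le> \<bar>K6\<bar> / N ^ 3" .
    from t10 t12 show "\<bar>2 * (real n / 12 - 1/4) * (real n / 30) * binomial_mean n (\<lambda>k. rdev n k ^ 10)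
        + (real n / 30)\<^sup>2 * binomial_mean n (\<lambda>k. rdev n k ^ 12)\<bar> \<le> (K5 + \<bar>K6\<bar>) / real n ^ 3"
      unfolding N_def add_divide_distrib by linarith
  qed
qed

lemma binom_varentropy_expansion:
  assumes "n \<ge> 1"
  shows "binom_varentropy n - (1/2 - 1 / (2 * real n) - 1 / (2 * (real n)\<^sup>2))
    = - 127 / (12 * real n ^ 3) + 2128 / (45 * real n ^ 4) - 7271 / (90 * real n ^ 5)
      + 1213 / (18 * real n ^ 6) - 1013 / (45 * real n ^ 7) - 64 / (225 * real n ^ 8)
      + (2 * (real n / 12 - 1/4) * (real n / 30) * binomial_mean n (\<lambda>k. rdev n k ^ 10)
         + (real n / 30)\<^sup>2 * binomial_mean n (\<lambda>k. rdev n k ^ 12))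
      + 2 * binomial_mean n (\<lambda>k. (info_poly n (rdev n k) - binomial_mean n (\<lambda>k. info_poly n (rdev n k)))
          * info_err n k)
      + binomial_mean n (\<lambda>k. (info_err n k - binomial_mean n (info_err n))\<^sup>2)"
proof -
  define a b c where "a = real n / 2 - 1/2 + 1 / (3 * real n)" and "b = real n / 12 - 1/4"
    and "c = real n / 30"
  define g where "g = (\<lambda>k. info_poly n (rdev n k))"
  have info: "binom_info n k = info_const n + g k + info_err n k" for k
    unfolding g_def info_err_def by simp
  have N: "real n > 0"
    using assms by simp
  have "binom_varentropy n
      = binomial_mean n (\<lambda>k. (info_const n + g k + info_err n k
          - binomial_mean n (\<lambda>k. info_const n + g k + info_err n k))\<^sup>2)"
    unfolding binom_varentropy_def expectation_binomial_half info ..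
  also have "\<dots> = (binomial_mean n (\<lambda>k. (g k)\<^sup>2) - (binomial_mean n g)\<^sup>2)
      + 2 * binomial_mean n (\<lambda>k. (g k - binomial_mean n g) * info_err n k)
      + binomial_mean n (\<lambda>k. (info_err n k - binomial_mean n (info_err n))\<^sup>2)"
    by (rule binomial_mean_variance_add)
  finally have V: "binom_varentropy n = \<dots>" .
  have "binomial_mean n (\<lambda>k. (g k)\<^sup>2) = binomial_mean n (\<lambda>k. a\<^sup>2 * rdev n k ^ 4 + 2 * a * b * rdev n k ^ 6
      + (b\<^sup>2 + 2 * a * c) * rdev n k ^ 8 + 2 * b * c * rdev n k ^ 10 + c\<^sup>2 * rdev n k ^ 12)"
    unfolding g_def info_poly_def a_def [symmetric] b_def [symmetric] c_def [symmetric]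
    by (rule binomial_mean_cong) (simp add: power2_eq_square algebra_simps power_add [symmetric] eval_nat_numeral)
  also have "\<dots> = a\<^sup>2 * binomial_mean n (\<lambda>k. rdev n k ^ 4) + 2 * a * b * binomial_mean n (\<lambda>k. rdev n k ^ 6)
      + (b\<^sup>2 + 2 * a * c) * binomial_mean n (\<lambda>k. rdev n k ^ 8)
      + (2 * b * c * binomial_mean n (\<lambda>k. rdev n k ^ 10) + c\<^sup>2 * binomial_mean n (\<lambda>k. rdev n k ^ 12))"
    by (simp only: binomial_mean_add binomial_mean_cmult add.assoc)
  finally have Eg2: "binomial_mean n (\<lambda>k. (g k)\<^sup>2) = \<dots>" .
  have Eg: "binomial_mean n g = a * binomial_mean n (\<lambda>k. rdev n k ^ 2)
      + b * binomial_mean n (\<lambda>k. rdev n k ^ 4) + c * binomial_mean n (\<lambda>k. rdev n k ^ 6)"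
    unfolding g_def info_poly_def a_def [symmetric] b_def [symmetric] c_def [symmetric]
    by (simp only: binomial_mean_add binomial_mean_cmult)
  have "a\<^sup>2 * ((3 * real n ^ 2 - 2 * real n) / real n ^ 4)
      + 2 * a * b * ((15 * real n ^ 3 - 30 * real n ^ 2 + 16 * real n) / real n ^ 6)
      + (b\<^sup>2 + 2 * a * c) * ((105 * real n ^ 4 - 420 * real n ^ 3 + 588 * real n ^ 2 - 272 * real n) / real n ^ 8)
      - (a * (1 / real n) + b * ((3 * real n ^ 2 - 2 * real n) / real n ^ 4)
         + c * ((15 * real n ^ 3 - 30 * real n ^ 2 + 16 * real n) / real n ^ 6))\<^sup>2
      - (1/2 - 1 / (2 * real n) - 1 / (2 * (real n)\<^sup>2))
    = - 127 / (12 * real n ^ 3) + 2128 / (45 * real n ^ 4) - 7271 / (90 * real n ^ 5)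
      + 1213 / (18 * real n ^ 6) - 1013 / (45 * real n ^ 7) - 64 / (225 * real n ^ 8)"
    unfolding a_def b_def c_def using N
    by (simp add: field_simps) (simp add: algebra_simps power2_eq_square power3_eq_cube power4_eq_xxxx power_eq_if)
  hence "binomial_mean n (\<lambda>k. (g k)\<^sup>2) - (binomial_mean n g)\<^sup>2 - (1/2 - 1 / (2 * real n) - 1 / (2 * (real n)\<^sup>2))
    = - 127 / (12 * real n ^ 3) + 2128 / (45 * real n ^ 4) - 7271 / (90 * real n ^ 5)
      + 1213 / (18 * real n ^ 6) - 1013 / (45 * real n ^ 7) - 64 / (225 * real n ^ 8)
      + (2 * b * c * binomial_mean n (\<lambda>k. rdev n k ^ 10) + c\<^sup>2 * binomial_mean n (\<lambda>k. rdev n k ^ 12))"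
    unfolding Eg2 Eg binomial_mean_rdev_powers[OF assms] by linarith
  with V show ?thesis
    unfolding g_def b_def c_def by linarith
qed

theorem lemma6:
  shows "(\<lambda>n. binom_entropy n - (1/2 * ln (pi * exp 1 * real n / 2) - 1 / (12 * (real n)^2)))
           \<in> O(\<lambda>n. 1 / (real n)^3) \<and>
         (\<lambda>n. binom_varentropy n - (1/2 - 1 / (2 * real n) - 1 / (2 * (real n)^2)))
           \<in> O(\<lambda>n. 1 / (real n)^3)"
proof
  show "(\<lambda>n. binom_entropy n - (1/2 * ln (pi * exp 1 * real n / 2) - 1 / (12 * (real n)^2)))
      \<in> O(\<lambda>n. 1 / (real n)^3)"
    by (rule bigo_cong_ge_1[OF _ binom_entropy_expansion]) (intro sum_in_bigo binomial_mean_info_err_bigo; real_asymp)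
  show "(\<lambda>n. binom_varentropy n - (1/2 - 1 / (2 * real n) - 1 / (2 * (real n)^2)))
      \<in> O(\<lambda>n. 1 / (real n)^3)"
    by (rule bigo_cong_ge_1[OF _ binom_varentropy_expansion])
      (intro info_poly_higher_moments_bigo info_err_variance_bigo sum_in_bigo
         landau_o.big.cmult_in_iff[THEN iffD2, OF numeral_neq_zero info_poly_info_err_covariance_bigo];
         real_asymp)
qed

end
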